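(* Let $\rho\colon\mathrm{Isom}(\mathbf H^1_{\mathbb C})_o\to\mathrm{Isom}(\mathbf H^\infty_{\mathbb C})_o$ be the complexification of an irreducible representation $\mathrm{Isom}(\mathbf H^1_{\mathbb C})_o\to\mathrm{Isom}(\mathbf H^\infty_{\mathbb R})_o$. Then $\mathrm{Im}\,K(b)=0$ for every $b\in\mathbb R$.
   Context: $\mathbf H^\infty_{\mathbb R}$ is defined from a real separable Hilbert space $\mathcal H_{\mathbb R}$ with a strongly non-degenerate symmetric bilinear form of signature $(1,\infty)$, and its isometries are induced by $O(1,\infty)$; a representation into $\mathrm{Isom}(\mathbf H^\infty_{\mathbb R})$ is a homomorphism into $O(1,\infty)$ acting on $\mathcal H_{\mathbb R}$; its complexification is the induced action on $\mathcal H=\mathcal H_{\mathbb R}\otimes\mathbb C$ with the sesquilinear extension $B$ of the form, giving a representation into $U(B)$ and hence into $\mathrm{Isom}(\mathbf H^\infty_{\mathbb C})_o$ where $\mathbf H^\infty_{\mathbb C}=\{[v]:B(v,v)>0\}$ (and this complexification is non-elementary). Representations are orbitally continuous homomorphisms; irreducible = no fixed point in the space or its boundary, no invariant pair of boundary points, and no proper invariant hyperbolic subspace. $\mathbf H^1_{\mathbb C}$: $\mathbb C^2$ with $B(z,w)=z_1\bar w_1-z_2\bar w_2$, $\xi_{1,2}=(e_1\pm e_2)/\sqrt2$; $g(\lambda,b)\in SU(1,1)$ has matrix $\begin{pmatrix}\lambda&ib\\0&\lambda^{-1}\end{pmatrix}$ in basis $(\xi_1,\xi_2)$. For non-elementary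 $\rho$ into $\mathrm{Isom}(\mathbf H^\infty_{\mathbb C})_o$: $\eta_1$ = unique common fixed boundary point of the $\rho(g(\lambda,b))$, $\eta_2$ = other endpoint of the common axis of the $\rho(g(\lambda,0))$, $\lambda\neq1$; isotropic representatives with $B(\eta_1,\eta_2)=1$; $E=\eta_1^\perp\cap\eta_2^\perp$; the lift $T_b\in U(B)$ of $\rho(g(1,b))$ with $T_b\eta_1=\eta_1$ satisfies $T_b\eta_2=K(b)\eta_1+\eta_2+c(b)$, $K(b)\in\mathbb C$, $c(b)\in E$ (the paper writes $\Delta(b)=\mathrm{Im}K(b)$). *)

theory Defs
  imports "HOL-Analysis.Analysis"
begin

text \<open>H_R is modelled as real x 'h with 'h an infinite-dimensional separable real
Hilbert space; the form is B((s,x),(t,y)) = s t - <x,y> (signature (1,infinity),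
strongly non-degenerate). Every such space is isometric to this model.\<close>

definition formB :: "real \<times> 'h::real_inner \<Rightarrow> real \<times> 'h \<Rightarrow> real" where
  "formB u v = fst u * fst v - inner (snd u) (snd v)"

definition infinite_dim :: "'h::real_vector itself \<Rightarrow> bool" where
  "infinite_dim TYPE('h) \<longleftrightarrow> \<not> (\<exists>S::'h set. finite S \<and> span S = UNIV)"

definition separable_space :: "'h::topological_space itself \<Rightarrow> bool" where
  "separable_space TYPE('h) \<longleftrightarrow> (\<exists>D::'h set. countable D \<and> closure D = UNIV)"

definition hermB1 :: "complex ^ 2 \<Rightarrow> complex ^ 2 \<Rightarrow> complex" where
  "hermB1 z w = z $ 1 * cnj (w $ 1) - z $ 2 * cnj (w $ 2)"

definition SU11 :: "(complex ^ 2 ^ 2) set" where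
  "SU11 = {A. det A = 1 \<and> (\<forall>z w. hermB1 (A *v z) (A *v w) = hermB1 z w)}"

text \<open>P has columns xi_1 = (e1+e2)/sqrt 2 and xi_2 = (e1-e2)/sqrt 2; P is its own inverse.\<close>
definition Pxi :: "complex ^ 2 ^ 2" where
  "Pxi = (\<chi> i j. if i = 2 \<and> j = 2 then - (1 / of_real (sqrt 2)) else 1 / of_real (sqrt 2))"

text \<open>g(lambda,b): matrix [[lambda, i b],[0, 1/lambda]] in the basis (xi_1, xi_2).\<close>
definition gxi :: "real \<Rightarrow> real \<Rightarrow> complex ^ 2 ^ 2" where
  "gxi l b = (\<chi> i j. if i = 1 \<and> j = 1 then complex_of_real l
                     else if i = 1 \<and> j = 2 then \<i> * complex_of_real b
                     else if i = 2 \<and> j = 2 then complex_of_real (1 / l) else 0)"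

definition gmat :: "real \<Rightarrow> real \<Rightarrow> complex ^ 2 ^ 2" where
  "gmat l b = Pxi ** gxi l b ** Pxi"

text \<open>A representation of Isom(H^1_C)_o = SU(1,1)/{+-1}: a homomorphism from SU(1,1)
into O(1,infinity) killing -1, orbitally continuous.\<close>
definition is_representation ::
  "(complex ^ 2 ^ 2 \<Rightarrow> real \<times> 'h::real_inner \<Rightarrow> real \<times> 'h) \<Rightarrow> bool" where
  "is_representation \<rho> \<longleftrightarrow>
     (\<forall>g\<in>SU11. bounded_linear (\<rho> g) \<and> bij (\<rho> g) \<and>
                (\<forall>x y. formB (\<rho> g x) (\<rho> g y) = formB x y)) \<and>
     (\<forall>g\<in>SU11. \<forall>h\<in>SU11. \<rho> (g ** h) = \<rho> g \<circ> \<rho> h) \<and>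
     \<rho> (- mat 1) = id \<and>
     (\<forall>x. continuous_on SU11 (\<lambda>g. \<rho> g x))"

definition proj_fixes :: "(real \<times> 'h::real_inner \<Rightarrow> real \<times> 'h) \<Rightarrow> real \<times> 'h \<Rightarrow> bool" where
  "proj_fixes T v \<longleftrightarrow> (\<exists>c. T v = c *\<^sub>R v)"

definition is_irreducible ::
  "(complex ^ 2 ^ 2 \<Rightarrow> real \<times> 'h::real_inner \<Rightarrow> real \<times> 'h) \<Rightarrow> bool" where
  "is_irreducible \<rho> \<longleftrightarrow>
     \<comment> \<open>no fixed point in H^infinity_R\<close>
     \<not> (\<exists>v. formB v v > 0 \<and> (\<forall>g\<in>SU11. proj_fixes (\<rho> g) v)) \<and>
     \<comment> \<open>no fixed point in the boundary\<close>
     \<not> (\<exists>v. v \<noteq> 0 \<and> formB v v = 0 \<and> (\<forall>g\<in>SU11. proj_fixes (\<rho> g) v)) \<and>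
     \<comment> \<open>no invariant pair of boundary points\<close>
     \<not> (\<exists>v w. v \<noteq> 0 \<and> formB v v = 0 \<and> w \<noteq> 0 \<and> formB w w = 0 \<and>
              \<not> (\<exists>c. w = c *\<^sub>R v) \<and>
              (\<forall>g\<in>SU11. (proj_fixes (\<rho> g) v \<and> proj_fixes (\<rho> g) w) \<or>
                         ((\<exists>c. \<rho> g v = c *\<^sub>R w) \<and> (\<exists>c. \<rho> g w = c *\<^sub>R v)))) \<and>
     \<comment> \<open>no proper invariant hyperbolic subspace\<close>
     \<not> (\<exists>W. subspace W \<and> closed W \<and> (\<exists>v\<in>W. formB v v > 0) \<and> W \<noteq> UNIV \<and>
              (\<forall>g\<in>SU11. \<rho> g ` W \<subseteq> W))"

text \<open>H = H_R tensor C is modelled as pairs (u,v) standing for u + i v.\<close>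

definition cscale :: "complex \<Rightarrow> ('v::real_vector \<times> 'v) \<Rightarrow> 'v \<times> 'v" where
  "cscale z p = (Re z *\<^sub>R fst p - Im z *\<^sub>R snd p, Re z *\<^sub>R snd p + Im z *\<^sub>R fst p)"

definition cformB :: "((real \<times> 'h::real_inner) \<times> (real \<times> 'h)) \<Rightarrow> ((real \<times> 'h) \<times> (real \<times> 'h)) \<Rightarrow> complex" where
  "cformB p q = Complex (formB (fst p) (fst q) + formB (snd p) (snd q))
                        (formB (snd p) (fst q) - formB (fst p) (snd q))"

definition cext :: "('v \<Rightarrow> 'v) \<Rightarrow> 'v \<times> 'v \<Rightarrow> 'v \<times> 'v" where
  "cext T p = (T (fst p), T (snd p))"

definition cproj_fixes :: "('v::real_vector \<times> 'v \<Rightarrow> 'v \<times> 'v) \<Rightarrow> 'v \<times> 'v \<Rightarrow> bool" where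
  "cproj_fixes T v \<longleftrightarrow> (\<exists>\<mu>. T v = cscale \<mu> v)"

end

(*
  Complex conjugation commutes with the complexified action, so it permutes the isotropic lines
  fixed by a subgroup. By uniqueness the line of eta1 is real, and so is the line of eta2: otherwise
  B(eta2, conj eta2) <> 0 forces each g(lambda,0) to act on eta2 by a sign, hence the continuous
  function b |-> B(T_b eta2, eta2) is invariant under b |-> lambda^2 b and equals its value
  B(eta2, eta2) = 0 at b = 0; then every T_b fixes the line of eta2, which would be a second
  isotropic line fixed by all g(lambda,b). With both lines real, conjugating
  T_b eta2 = K(b) eta1 + eta2 + c(b) and pairing with eta2 yields K(b) = conj K(b).
*)
theory Submission
  imports Defs
begin

lemma formB_commute: "formB y x = formB x y"
  by (simp add: formB_def inner_commute mult.commute)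

lemma cformB_add_left: "cformB (x + y) z = cformB x z + cformB y z"
  by (simp add: cformB_def formB_def complex_eq_iff algebra_simps)

lemma cformB_add_right: "cformB z (x + y) = cformB z x + cformB z y"
  by (simp add: cformB_def formB_def complex_eq_iff algebra_simps)

lemma cformB_diff_left: "cformB (x - y) z = cformB x z - cformB y z"
  by (simp add: cformB_def formB_def complex_eq_iff algebra_simps)

lemma cformB_diff_right: "cformB z (x - y) = cformB z x - cformB z y"
  by (simp add: cformB_def formB_def complex_eq_iff algebra_simps)

lemma cformB_cscale_left: "cformB (cscale a x) z = a * cformB x z"
  by (simp add: cformB_def cscale_def formB_def complex_eq_iff algebra_simps)

lemma cformB_cscale_right: "cformB z (cscale a x) = cnj a * cformB z x"
  by (simp add: cformB_def cscale_def formB_def complex_eq_iff algebra_simps)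

lemma cformB_commute: "cformB y x = cnj (cformB x y)"
  by (simp add: cformB_def complex_eq_iff formB_commute)

lemmas cformB_simps = cformB_add_left cformB_add_right cformB_diff_left cformB_diff_right
  cformB_cscale_left cformB_cscale_right

lemma cscale_cscale: "cscale a (cscale b x) = cscale (a * b) x"
  by (simp add: cscale_def prod_eq_iff algebra_simps)

lemma cscale_one [simp]: "cscale 1 x = x"
  by (simp add: cscale_def)

lemma cscale_zero_left [simp]: "cscale 0 x = 0"
  by (simp add: cscale_def zero_prod_def)

lemma cscale_zero_right [simp]: "cscale a 0 = 0"
  by (simp add: cscale_def zero_prod_def)

lemma cscale_left_diff_distrib: "cscale (a - b) x = cscale a x - cscale b x"
  by (simp add: cscale_def prod_eq_iff algebra_simps)

lemma cscale_eq_0_iff: "cscale a x = 0 \<longleftrightarrow> a = 0 \<or> x = 0"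
proof
  assume "cscale a x = 0"
  then have "cscale (inverse a) (cscale a x) = 0"
    by (simp add: cscale_def zero_prod_def)
  then show "a = 0 \<or> x = 0"
    by (cases "a = 0") (simp_all add: cscale_cscale)
qed auto

lemma cscale_cancel_right: "cscale a x = cscale b x \<Longrightarrow> x \<noteq> 0 \<Longrightarrow> a = b"
  by (metis cscale_left_diff_distrib cscale_eq_0_iff diff_self eq_iff_diff_eq_0)

definition cconj :: "'v::real_vector \<times> 'v \<Rightarrow> 'v \<times> 'v" where
  "cconj p = (fst p, - snd p)"

lemma cconj_cconj [simp]: "cconj (cconj x) = x"
  by (simp add: cconj_def)

lemma cconj_eq_0_iff [simp]: "cconj x = 0 \<longleftrightarrow> x = 0"
  by (auto simp: cconj_def prod_eq_iff)

lemma cconj_add: "cconj (x + y) = cconj x + cconj y"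
  by (simp add: cconj_def)

lemma cconj_cscale: "cconj (cscale a x) = cscale (cnj a) (cconj x)"
  by (simp add: cconj_def cscale_def prod_eq_iff algebra_simps)

lemma cformB_cconj: "cformB (cconj x) (cconj y) = cnj (cformB x y)"
  by (simp add: cformB_def cconj_def formB_def complex_eq_iff)

lemma cext_cconj: "linear S \<Longrightarrow> cext S (cconj x) = cconj (cext S x)"
  by (simp add: cext_def cconj_def linear_neg)

lemma cext_cscale: "linear S \<Longrightarrow> cext S (cscale a x) = cscale a (cext S x)"
  by (simp add: cext_def cscale_def linear_diff linear_add linear_scale)

lemma cformB_cext:
  "(\<And>x y. formB (S x) (S y) = formB x y) \<Longrightarrow> cformB (cext S x) (cext S y) = cformB x y"
  by (simp add: cext_def cformB_def)

lemma cproj_fixes_cconj: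
  "linear S \<Longrightarrow> cproj_fixes (cext S) v \<Longrightarrow> cproj_fixes (cext S) (cconj v)"
  by (auto simp: cproj_fixes_def cext_cconj cconj_cscale)

lemma cconj_eigenvalue_unimodular:
  assumes "cconj x = cscale \<nu> x" "x \<noteq> 0"
  shows "cnj \<nu> * \<nu> = 1"
proof -
  have "cscale 1 x = cscale (cnj \<nu> * \<nu>) x"
    by (metis assms(1) cconj_cconj cconj_cscale cscale_cscale cscale_one)
  then show ?thesis
    using assms(2) cscale_cancel_right by metis
qed

lemma cconj_eigenvalues_eq:
  assumes "cconj \<eta>1 = cscale \<nu> \<eta>1" "cconj \<eta>2 = cscale \<gamma> \<eta>2" "\<eta>1 \<noteq> 0" "cformB \<eta>1 \<eta>2 = 1"
  shows "\<gamma> = \<nu>"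
proof -
  have "\<nu> * cnj \<gamma> = 1"
    using cformB_cconj[of \<eta>1 \<eta>2] assms by (simp add: cformB_simps mult.commute)
  moreover have "\<nu> * cnj \<nu> = 1"
    using cconj_eigenvalue_unimodular[OF assms(1,3)] by (simp add: mult.commute)
  ultimately show ?thesis
    by (metis complex_cnj_cnj mult_cancel_left mult_zero_left zero_neq_one)
qed

(* The time coordinate u_0 + i v_0 of u + i v; on its kernel the form is negative definite. *)
definition ctime :: "(real \<times> 'h::real_inner) \<times> (real \<times> 'h) \<Rightarrow> complex" where
  "ctime z = Complex (fst (fst z)) (fst (snd z))"

lemma ctime_diff: "ctime (x - y) = ctime x - ctime y"
  by (simp add: ctime_def complex_eq_iff)

lemma ctime_cscale: "ctime (cscale a z) = a * ctime z"
  by (simp add: ctime_def cscale_def complex_eq_iff algebra_simps)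

lemma isotropic_ctime_eq_0:
  assumes "cformB z z = 0" "ctime z = 0"
  shows "z = 0"
proof -
  have time: "fst (fst z) = 0" "fst (snd z) = 0"
    using assms(2) by (auto simp: ctime_def complex_eq_iff)
  then have "inner (snd (fst z)) (snd (fst z)) + inner (snd (snd z)) (snd (snd z)) = 0"
    using assms(1) by (simp add: cformB_def formB_def complex_eq_iff)
  then have "snd (fst z) = 0" "snd (snd z) = 0"
    by (smt (verit) inner_eq_zero_iff inner_ge_zero)+
  with time show ?thesis
    by (simp add: prod_eq_iff)
qed

lemma isotropic_orthogonal_imp_proportional:
  assumes "x \<noteq> 0" "cformB x x = 0" "cformB y y = 0" "cformB y x = 0"
  shows "\<exists>\<kappa>. y = cscale \<kappa> x"
proof -
  have "ctime x \<noteq> 0"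
    using isotropic_ctime_eq_0 assms(1,2) by blast
  define y' where "y' = y - cscale (ctime y / ctime x) x"
  have "cformB y' y' = 0"
    using assms(2-4) by (simp add: y'_def cformB_simps cformB_commute[of x y])
  moreover have "ctime y' = 0"
    using \<open>ctime x \<noteq> 0\<close> by (simp add: y'_def ctime_diff ctime_cscale)
  ultimately have "y' = 0"
    by (rule isotropic_ctime_eq_0)
  then show ?thesis
    by (auto simp: y'_def)
qed

lemma isotropic_cconj_orthogonal_imp_real:
  assumes "\<eta> \<noteq> 0" "cformB \<eta> \<eta> = 0" "cformB \<eta> (cconj \<eta>) = 0"
  shows "\<exists>\<gamma>. cconj \<eta> = cscale \<gamma> \<eta>"
proof (rule isotropic_orthogonal_imp_proportional[OF assms(1,2)])
  show "cformB (cconj \<eta>) (cconj \<eta>) = 0"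
    using assms(2) by (simp add: cformB_cconj)
  show "cformB (cconj \<eta>) \<eta> = 0"
    using assms(3) by (simp add: cformB_commute[of \<eta>])
qed

lemma translation_coefficient_real:
  assumes S: "linear S"
    and conj1: "cconj \<eta>1 = cscale \<nu> \<eta>1" and conj2: "cconj \<eta>2 = cscale \<nu> \<eta>2"
    and "\<eta>1 \<noteq> 0" "cformB \<eta>1 \<eta>2 = 1" "cformB \<eta>2 \<eta>2 = 0" "cformB c \<eta>2 = 0"
    and fix1: "cscale \<mu> (cext S \<eta>1) = \<eta>1"
    and fix2: "cscale \<mu> (cext S \<eta>2) = cscale K \<eta>1 + \<eta>2 + c"
  shows "Im K = 0"
proof -
  have \<nu>: "cnj \<nu> * \<nu> = 1"
    using cconj_eigenvalue_unimodular[OF conj1 \<open>\<eta>1 \<noteq> 0\<close>] .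
  have "cscale (cnj \<mu> * \<nu>) (cext S \<eta>1) = cconj \<eta>1"
    using arg_cong[OF fix1, of cconj]
    by (simp add: cconj_cscale cext_cconj[OF S, symmetric] conj1 cext_cscale[OF S] cscale_cscale)
  also have "\<dots> = cscale (\<nu> * \<mu>) (cext S \<eta>1)"
    by (metis conj1 fix1 cscale_cscale)
  finally have "cnj \<mu> * \<nu> = \<nu> * \<mu>"
    by (rule cscale_cancel_right) (use fix1 \<open>\<eta>1 \<noteq> 0\<close> in auto)
  then have \<mu>_real: "cnj \<mu> = \<mu>"
    using \<nu> by (auto simp: mult.commute)
  define R where "R = cscale K \<eta>1 + \<eta>2 + c"
  have "cconj R = cscale (\<mu> * \<nu>) (cext S \<eta>2)"
    using arg_cong[OF fix2, of cconj]
    by (simp add: R_def cconj_cscale cext_cconj[OF S, symmetric] conj2 cext_cscale[OF S]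
        cscale_cscale \<mu>_real)
  also have "\<dots> = cscale \<nu> R"
    by (metis R_def fix2 cscale_cscale mult.commute)
  finally have "cconj R = cscale \<nu> R" .
  then have "cformB (cconj R) \<eta>2 = \<nu> * K"
    using \<open>cformB \<eta>1 \<eta>2 = 1\<close> \<open>cformB \<eta>2 \<eta>2 = 0\<close> \<open>cformB c \<eta>2 = 0\<close>
    by (simp add: R_def cformB_simps)
  moreover have "cformB (cconj c) \<eta>2 = 0"
  proof -
    have "cformB (cconj c) \<eta>2 = cformB (cconj c) (cconj (cscale \<nu> \<eta>2))"
      by (simp flip: conj2)
    also have "\<dots> = \<nu> * cnj (cformB c \<eta>2)"
      by (simp add: cconj_cscale cformB_cscale_right cformB_cconj)
    finally show ?thesis
      using \<open>cformB c \<eta>2 = 0\<close> by simp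
  qed
  then have "cformB (cconj R) \<eta>2 = cnj K * \<nu>"
    using \<open>cformB \<eta>1 \<eta>2 = 1\<close> \<open>cformB \<eta>2 \<eta>2 = 0\<close>
    by (simp add: R_def cconj_add cconj_cscale conj1 conj2 cformB_simps)
  ultimately have "cnj K = K"
    using \<nu> by (auto simp: mult.commute)
  then show ?thesis
    by (metis cnj.sel(2) neg_equal_zero)
qed

lemma isometry_eigenvalue_sign:
  assumes "linear S" "\<And>x y. formB (S x) (S y) = formB x y"
    and "cext S \<eta> = cscale s \<eta>" "cformB \<eta> (cconj \<eta>) \<noteq> 0"
  shows "s = 1 \<or> s = -1"
proof -
  have "cext S (cconj \<eta>) = cscale (cnj s) (cconj \<eta>)"
    using assms(1,3) by (simp add: cext_cconj cconj_cscale)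
  then have "s * s * cformB \<eta> (cconj \<eta>) = cformB \<eta> (cconj \<eta>)"
    using cformB_cext[of S \<eta> "cconj \<eta>", OF assms(2)] assms(3)
    by (simp add: cformB_simps mult.assoc)
  then have "s * s = 1"
    using assms(4) by simp
  then show ?thesis
    by (metis power2_eq_square power2_eq_1_iff)
qed

lemma dilation_invariant_imp_constant:
  fixes f :: "real \<Rightarrow> 'a::t2_space"
  assumes "isCont f 0" and "\<And>t x. t > 0 \<Longrightarrow> f (t * x) = f x"
  shows "f x = f 0"
proof -
  have "((\<lambda>t. t * x) \<longlongrightarrow> 0) (at_right 0)"
    by (intro tendsto_mult_left_zero tendsto_ident_at)
  then have "((\<lambda>t. f (t * x)) \<longlongrightarrow> f 0) (at_right 0)"
    by (rule isCont_tendsto_compose[OF assms(1)])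
  moreover have "((\<lambda>t. f (t * x)) \<longlongrightarrow> f x) (at_right 0)"
    by (intro tendsto_eventually eventually_mono[OF eventually_at_right_less]) (simp add: assms(2))
  ultimately show ?thesis
    by (rule tendsto_unique[OF trivial_limit_at_right_real, symmetric])
qed

(* Kept opaque: with 1 / sqrt 2 unfolded, simp gets lost in the matrix computations below. *)
definition inv_sqrt2 :: complex where
  "inv_sqrt2 = 1 / complex_of_real (sqrt 2)"

lemma inv_sqrt2_sq: "inv_sqrt2 * inv_sqrt2 = 1 / 2"
  by (simp add: inv_sqrt2_def flip: of_real_mult)

lemma cnj_inv_sqrt2 [simp]: "cnj inv_sqrt2 = inv_sqrt2"
  by (simp add: inv_sqrt2_def)

lemma inv_sqrt2_sq_mult: "inv_sqrt2 * (inv_sqrt2 * x) = x / 2"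
  by (simp add: mult.assoc[symmetric] inv_sqrt2_sq)

lemma Pxi_eq: "Pxi = (\<chi> i j. if i = 2 \<and> j = 2 then - inv_sqrt2 else inv_sqrt2)"
  unfolding Pxi_def inv_sqrt2_def ..

lemma Pxi_involution: "Pxi ** Pxi = mat 1"
  by (simp add: Pxi_eq vec_eq_iff forall_2 matrix_matrix_mult_def sum_2 mat_def inv_sqrt2_sq)

lemma gxi_mult: "gxi l b ** gxi l' b' = gxi (l * l') (l * b' + b / l')"
  by (simp add: vec_eq_iff forall_2 matrix_matrix_mult_def sum_2 gxi_def algebra_simps)

lemma gmat_mult: "gmat l b ** gmat l' b' = gmat (l * l') (l * b' + b / l')"
proof -
  have "gmat l b ** gmat l' b' = Pxi ** gxi l b ** (Pxi ** Pxi) ** gxi l' b' ** Pxi"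
    by (simp add: gmat_def matrix_mul_assoc)
  also have "\<dots> = Pxi ** (gxi l b ** gxi l' b') ** Pxi"
    by (simp add: Pxi_involution matrix_mul_assoc)
  finally show ?thesis
    by (simp add: gxi_mult gmat_def)
qed

lemma gmat_1_0: "gmat 1 0 = mat 1"
proof -
  have "gxi 1 0 = mat 1"
    by (simp add: vec_eq_iff forall_2 gxi_def mat_def)
  then show ?thesis
    by (simp add: gmat_def Pxi_involution)
qed

lemma gmat_1_affine: "gmat 1 b = mat 1 + b *\<^sub>R (gmat 1 1 - mat 1)"
  by (simp add: vec_eq_iff forall_2 matrix_matrix_mult_def sum_2 gmat_def gxi_def Pxi_eq mat_def
      algebra_simps inv_sqrt2_sq inv_sqrt2_sq_mult scaleR_conv_of_real[where 'a=complex])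

lemma continuous_gmat_1: "continuous_on S (\<lambda>b. gmat 1 b)"
  by (subst gmat_1_affine) (intro continuous_intros)

definition hermB1_xi :: "complex ^ 2 \<Rightarrow> complex ^ 2 \<Rightarrow> complex" where
  "hermB1_xi z w = z $ 1 * cnj (w $ 2) + z $ 2 * cnj (w $ 1)"

lemma hermB1_Pxi: "hermB1 (Pxi *v z) (Pxi *v w) = hermB1_xi z w"
  by (simp add: hermB1_def hermB1_xi_def matrix_vector_mult_def sum_2 Pxi_eq algebra_simps
      inv_sqrt2_sq inv_sqrt2_sq_mult)

lemma hermB1_xi_gxi: "l \<noteq> 0 \<Longrightarrow> hermB1_xi (gxi l b *v z) (gxi l b *v w) = hermB1_xi z w"
  by (simp add: hermB1_xi_def matrix_vector_mult_def sum_2 gxi_def algebra_simps)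

lemma gmat_SU11:
  assumes "l \<noteq> 0"
  shows "gmat l b \<in> SU11"
proof -
  have "det Pxi = -1"
    by (simp add: det_2 Pxi_eq inv_sqrt2_sq)
  moreover have "det (gxi l b) = 1"
    using assms by (simp add: det_2 gxi_def)
  ultimately have "det (gmat l b) = 1"
    by (simp add: gmat_def det_mul)
  moreover have "hermB1 (gmat l b *v z) (gmat l b *v w) = hermB1 z w" for z w
  proof -
    have "hermB1 z w = hermB1 (Pxi *v (Pxi *v z)) (Pxi *v (Pxi *v w))"
      by (simp add: matrix_vector_mul_assoc Pxi_involution)
    also have "\<dots> = hermB1_xi (gxi l b *v (Pxi *v z)) (gxi l b *v (Pxi *v w))"
      by (simp add: hermB1_Pxi hermB1_xi_gxi[OF assms])
    also have "\<dots> = hermB1 (gmat l b *v z) (gmat l b *v w)"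
      by (simp add: hermB1_Pxi[symmetric] gmat_def matrix_vector_mul_assoc matrix_mul_assoc)
    finally show ?thesis
      by simp
  qed
  ultimately show ?thesis
    by (simp add: SU11_def)
qed

context
  fixes \<rho> :: "complex ^ 2 ^ 2 \<Rightarrow> real \<times> 'h::real_inner \<Rightarrow> real \<times> 'h"
  assumes rep: "is_representation \<rho>"
begin

lemma rep_linear: "g \<in> SU11 \<Longrightarrow> linear (\<rho> g)"
  using rep bounded_linear.linear unfolding is_representation_def by blast

lemma rep_formB: "g \<in> SU11 \<Longrightarrow> formB (\<rho> g x) (\<rho> g y) = formB x y"
  using rep unfolding is_representation_def by blast

lemma rep_cext_mult:
  "g \<in> SU11 \<Longrightarrow> h \<in> SU11 \<Longrightarrow> cext (\<rho> (g ** h)) x = cext (\<rho> g) (cext (\<rho> h) x)"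
  using rep unfolding is_representation_def by (simp add: cext_def)

lemma rep_mat_1: "\<rho> (mat 1) x = x"
proof -
  have "mat 1 \<in> SU11"
    by (simp add: SU11_def)
  then have "\<rho> (mat 1) (\<rho> (mat 1) x) = \<rho> (mat 1) x" and "inj (\<rho> (mat 1))"
    using rep unfolding is_representation_def by (metis comp_apply matrix_mul_lid, blast intro: bij_is_inj)
  then show ?thesis
    by (meson injD)
qed

lemma isCont_unipotent_pairing: "isCont (\<lambda>b. cformB (cext (\<rho> (gmat 1 b)) x) y) b0"
proof -
  have "continuous_on UNIV (\<lambda>b. \<rho> (gmat 1 b) v)" for v
  proof (rule continuous_on_compose2[OF _ continuous_gmat_1])
    show "continuous_on SU11 (\<lambda>g. \<rho> g v)"
      using rep unfolding is_representation_def by blast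
  qed (auto simp: gmat_SU11)
  then show ?thesis
    unfolding cext_def cformB_def formB_def Complex_eq
    by (simp add: continuous_on_eq_continuous_at continuous_intros)
qed

lemma unipotent_pairing_dilation_invariant:
  assumes "l \<noteq> 0" "cext (\<rho> (gmat l 0)) \<eta> = cscale s \<eta>" "s = 1 \<or> s = -1"
  shows "cformB (cext (\<rho> (gmat 1 (l\<^sup>2 * b))) \<eta>) \<eta> = cformB (cext (\<rho> (gmat 1 b)) \<eta>) \<eta>"
proof -
  let ?D = "cext (\<rho> (gmat l 0))" and ?T = "\<lambda>b. cext (\<rho> (gmat 1 b))"
  have D: "gmat l 0 \<in> SU11" and T: "gmat 1 b' \<in> SU11" for b'
    using assms(1) by (simp_all add: gmat_SU11)
  have "gmat 1 (l\<^sup>2 * b) ** gmat l 0 = gmat l 0 ** gmat 1 b"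
    using assms(1) by (simp add: gmat_mult power2_eq_square)
  then have "?T (l\<^sup>2 * b) (?D \<eta>) = ?D (?T b \<eta>)"
    by (metis rep_cext_mult D T)
  then have "cformB (?T (l\<^sup>2 * b) (?D \<eta>)) (?D \<eta>) = cformB (?T b \<eta>) \<eta>"
    by (simp add: cformB_cext rep_formB[OF D])
  then show ?thesis
    using assms(2,3) by (auto simp: cext_cscale[OF rep_linear[OF T]] cformB_simps)
qed

lemma unique_fixed_isotropic_line_real:
  assumes "\<eta> \<noteq> 0" "cformB \<eta> \<eta> = 0"
    and fixed: "\<forall>l b. l \<noteq> 0 \<longrightarrow> cproj_fixes (cext (\<rho> (gmat l b))) \<eta>"
    and unique: "\<forall>v. v \<noteq> 0 \<and> cformB v v = 0 \<and> (\<forall>l b. l \<noteq> 0 \<longrightarrow> cproj_fixes (cext (\<rho> (gmat l b))) v)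
                   \<longrightarrow> (\<exists>\<mu>. v = cscale \<mu> \<eta>)"
  shows "\<exists>\<nu>. cconj \<eta> = cscale \<nu> \<eta>"
proof -
  have "cconj \<eta> \<noteq> 0" "cformB (cconj \<eta>) (cconj \<eta>) = 0"
    using assms(1,2) by (simp_all add: cformB_cconj)
  moreover have "\<forall>l b. l \<noteq> 0 \<longrightarrow> cproj_fixes (cext (\<rho> (gmat l b))) (cconj \<eta>)"
    using fixed cproj_fixes_cconj rep_linear gmat_SU11 by blast
  ultimately show ?thesis
    using unique by blast
qed

lemma fixed_by_diagonal_imp_fixed_by_triangular:
  assumes "\<eta> \<noteq> 0" "cformB \<eta> \<eta> = 0" "cformB \<eta> (cconj \<eta>) \<noteq> 0"
    and diag: "\<forall>l. l \<noteq> 0 \<longrightarrow> cproj_fixes (cext (\<rho> (gmat l 0))) \<eta>"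
  shows "\<forall>l b. l \<noteq> 0 \<longrightarrow> cproj_fixes (cext (\<rho> (gmat l b))) \<eta>"
proof (intro allI impI)
  fix l b :: real
  assume "l \<noteq> 0"
  define k where "k b = cformB (cext (\<rho> (gmat 1 b)) \<eta>) \<eta>" for b
  have "k (t * b) = k b" if "t > 0" for t b
  proof -
    have "sqrt t \<noteq> 0"
      using that by simp
    moreover obtain s where s: "cext (\<rho> (gmat (sqrt t) 0)) \<eta> = cscale s \<eta>"
      using diag \<open>sqrt t \<noteq> 0\<close> unfolding cproj_fixes_def by blast
    moreover have "s = 1 \<or> s = -1"
      using \<open>sqrt t \<noteq> 0\<close> by (intro isometry_eigenvalue_sign[OF _ _ s assms(3)])
        (simp_all add: rep_linear rep_formB gmat_SU11)
    ultimately show ?thesis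
      using unipotent_pairing_dilation_invariant[of "sqrt t" \<eta> s b] that by (simp add: k_def)
  qed
  moreover have "isCont k 0"
    unfolding k_def by (rule isCont_unipotent_pairing)
  ultimately have "k b' = k 0" for b'
    using dilation_invariant_imp_constant by blast
  then have orth: "cformB (cext (\<rho> (gmat 1 b')) \<eta>) \<eta> = 0" for b'
    using assms(2) by (simp add: k_def gmat_1_0 rep_mat_1 cext_def)
  have unip: "\<exists>m. cext (\<rho> (gmat 1 b')) \<eta> = cscale m \<eta>" for b'
    using isotropic_orthogonal_imp_proportional[OF assms(1,2) _ orth]
    by (simp add: assms(2) cformB_cext rep_formB gmat_SU11)
  obtain s where "cext (\<rho> (gmat l 0)) \<eta> = cscale s \<eta>"
    using diag \<open>l \<noteq> 0\<close> unfolding cproj_fixes_def by blast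
  moreover obtain m where "cext (\<rho> (gmat 1 (b / l))) \<eta> = cscale m \<eta>"
    using unip by blast
  moreover have "gmat l b = gmat l 0 ** gmat 1 (b / l)"
    using \<open>l \<noteq> 0\<close> by (simp add: gmat_mult)
  ultimately have "cext (\<rho> (gmat l b)) \<eta> = cscale (s * m) \<eta>"
    using \<open>l \<noteq> 0\<close> by (simp add: rep_cext_mult gmat_SU11 cext_cscale rep_linear cscale_cscale mult.commute)
  then show "cproj_fixes (cext (\<rho> (gmat l b))) \<eta>"
    unfolding cproj_fixes_def by blast
qed

end

theorem mainTheorem14:
  fixes \<rho> :: "complex ^ 2 ^ 2 \<Rightarrow> real \<times> 'h::{real_inner, complete_space} \<Rightarrow> real \<times> 'h"
    and \<eta>1 \<eta>2 :: "(real \<times> 'h) \<times> (real \<times> 'h)"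
  assumes "infinite_dim TYPE('h)" and "separable_space TYPE('h)"
    and "is_representation \<rho>" and "is_irreducible \<rho>"
    and "\<eta>1 \<noteq> 0" and "cformB \<eta>1 \<eta>1 = 0"
    and "\<forall>l b. l \<noteq> 0 \<longrightarrow> cproj_fixes (cext (\<rho> (gmat l b))) \<eta>1"
    and "\<forall>v. v \<noteq> 0 \<and> cformB v v = 0 \<and> (\<forall>l b. l \<noteq> 0 \<longrightarrow> cproj_fixes (cext (\<rho> (gmat l b))) v)
            \<longrightarrow> (\<exists>\<mu>. v = cscale \<mu> \<eta>1)"
    and "\<eta>2 \<noteq> 0" and "cformB \<eta>2 \<eta>2 = 0" and "\<not> (\<exists>\<mu>. \<eta>2 = cscale \<mu> \<eta>1)"
    and "\<forall>l. l \<noteq> 0 \<longrightarrow> cproj_fixes (cext (\<rho> (gmat l 0))) \<eta>2"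
    and "cformB \<eta>1 \<eta>2 = 1"
  shows "\<forall>b \<mu> K c.
           cscale \<mu> (cext (\<rho> (gmat 1 b)) \<eta>1) = \<eta>1 \<and>
           cformB c \<eta>1 = 0 \<and> cformB c \<eta>2 = 0 \<and>
           cscale \<mu> (cext (\<rho> (gmat 1 b)) \<eta>2) = cscale K \<eta>1 + \<eta>2 + c
           \<longrightarrow> Im K = 0"
proof -
  obtain \<nu> where \<nu>: "cconj \<eta>1 = cscale \<nu> \<eta>1"
    using unique_fixed_isotropic_line_real[OF assms(3,5-8)] by blast
  have "\<exists>\<gamma>. cconj \<eta>2 = cscale \<gamma> \<eta>2"
  proof (rule ccontr)
    assume "\<nexists>\<gamma>. cconj \<eta>2 = cscale \<gamma> \<eta>2"
    then have "cformB \<eta>2 (cconj \<eta>2) \<noteq> 0"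
      using isotropic_cconj_orthogonal_imp_real assms(9,10) by blast
    then have "\<forall>l b. l \<noteq> 0 \<longrightarrow> cproj_fixes (cext (\<rho> (gmat l b))) \<eta>2"
      by (rule fixed_by_diagonal_imp_fixed_by_triangular[OF assms(3,9,10) _ assms(12)])
    then show False
      using assms(8)[rule_format, of \<eta>2] assms(9-11) by blast
  qed
  then obtain \<gamma> where "cconj \<eta>2 = cscale \<gamma> \<eta>2" ..
  with \<nu> have "cconj \<eta>2 = cscale \<nu> \<eta>2"
    using cconj_eigenvalues_eq assms(5,13) by blast
  moreover have "linear (\<rho> (gmat 1 b))" for b
    using rep_linear[OF assms(3)] gmat_SU11 by simp
  ultimately show ?thesis
    using translation_coefficient_real[OF _ \<nu>] assms(5,13,10) by blast
qed

end
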